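(* Let $0<\tau\le L$ and let $f:\mathbb{R}^n\to\mathbb{R}$ be strongly convex with constant $\tau$ with $L$-Lipschitz gradient, with minimizer $x^*$. Consider the following randomized coordinate-descent algorithm with input $x_0\in\mathbb{R}^n$ and $\eta>0$: for $k=0,1,2,\dots$, choose $d_k=\mathbf{e}_i$ with $i\in\{1,\dots,n\}$ uniformly at random (independently of the past), obtain from a line search a step $\alpha_k$ with $|\alpha_k-\alpha^*|\le\eta$ where $\alpha^*=\arg\min_{\alpha\in\mathbb{R}} f(x_k+\alpha d_k)$, and set $x_{k+1}=x_k+\alpha_k d_k$. Assume that for the given $\eta$ each such line search uses at most $T_\ell(\eta)$ queries to a pairwise comparison oracle. If $x_K$ is the estimate of $x^*$ produced after requesting no more than $K$ pairwise comparisons, then \[ \sup_f \mathbb{E}[ f(x_{K})-f(x^* ) ] \leq \frac{4nL^2 \eta^2}{\tau} \quad \text{ whenever } \quad K \geq \frac{4n L}{ \tau} \log\left( \frac{f(x_0)-f(x^* )}{\eta^2\, 2 n L^2 / \tau} \right) T_\ell(\eta), \] where the expectation is with respect to the random choice of $d_k$ at each iteration and the supremum is over such $f$.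
   Context: $\mathbf{e}_i$ denotes the $i$-th standard basis vector of $\mathbb{R}^n$. A function $f$ is strongly convex with constant $\tau>0$ if $f(y)\ge f(x)+\langle\nabla f(x),y-x\rangle+\frac{\tau}{2}\|x-y\|^2$ for all $x,y$; its gradient is $L$-Lipschitz if $\|\nabla f(x)-\nabla f(y)\|\le L\|x-y\|$. A pairwise comparison oracle answers queries $(x,y)$ with a value in $\{-1,1\}$ intended to indicate $\mathrm{sign}\{f(y)-f(x)\}$. *)

theory Defs
  imports "HOL-Analysis.Analysis" "HOL-Probability.Probability"
begin

text \<open>Randomized coordinate descent with inexact line search.
  ls k x i is the step returned by the line search at iteration k, from point x,
  along direction e_i = axis i 1; d is the sequence of chosen coordinates.\<close>

fun cd_iter :: "(nat \<Rightarrow> real^'n \<Rightarrow> 'n \<Rightarrow> real) \<Rightarrow> real^'n \<Rightarrow> (nat \<Rightarrow> 'n) \<Rightarrow> nat \<Rightarrow> real^'n" where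
  "cd_iter ls x0 d 0 = x0"
| "cd_iter ls x0 d (Suc k) =
     (let x = cd_iter ls x0 d k in x + ls k x (d k) *\<^sub>R axis (d k) 1)"

end

(* A coordinate step whose step size is within eta of the exact line minimiser decreases f by
   at least (partial_i f)^2/(2L), up to an additive L eta^2/2: along the line, the exact minimiser
   is no worse than the gradient step of length 1/L, and the descent lemma bounds the cost of
   missing the minimiser by eta. Averaging over the uniformly chosen coordinate and using the
   Polyak-Lojasiewicz inequality ||grad f||^2 >= 2 tau (f - f xstar) contracts the expected gap
   by the factor 1 - tau/(nL) per iteration, up to L eta^2/2. After m iterations the gap is thus
   at most (1 - tau/(nL))^m (f x0 - f xstar) + n L^2 eta^2/(2 tau), and the lower bound on K
   makes the first term at most 7/4 of the scale 2 n L^2 eta^2/tau. *)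
theory Submission
  imports Defs
begin

lemma lipschitz_deriv_quadratic_upper_bound:
  fixes \<phi> \<phi>' :: "real \<Rightarrow> real" and L s t :: real
  assumes deriv: "\<And>u. (\<phi> has_real_derivative \<phi>' u) (at u)"
    and lipschitz: "\<And>u v. \<bar>\<phi>' u - \<phi>' v\<bar> \<le> L * \<bar>u - v\<bar>"
  shows "\<phi> t \<le> \<phi> s + (t - s) * \<phi>' s + L / 2 * (t - s)\<^sup>2"
proof -
  define \<psi> where "\<psi> u = \<phi> u - \<phi> s - (u - s) * \<phi>' s - L / 2 * (u - s)\<^sup>2" for u
  have deriv_\<psi>: "(\<psi> has_real_derivative (\<phi>' u - \<phi>' s - L * (u - s))) (at u)" for u
    unfolding \<psi>_def
    by (auto intro!: derivative_eq_intros deriv simp: power2_eq_square algebra_simps)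
  have "\<psi> t \<le> \<psi> s"
  proof (cases "s \<le> t")
    case True
    show ?thesis
    proof (rule DERIV_nonpos_imp_nonincreasing[OF True])
      fix u assume "s \<le> u"
      moreover have "\<phi>' u - \<phi>' s \<le> L * \<bar>u - s\<bar>" using lipschitz[of u s] by linarith
      ultimately show "\<exists>y. (\<psi> has_real_derivative y) (at u) \<and> y \<le> 0"
        using deriv_\<psi> by (intro exI[of _ "\<phi>' u - \<phi>' s - L * (u - s)"]) auto
    qed
  next
    case False
    show ?thesis
    proof (rule DERIV_nonneg_imp_nondecreasing[of t s])
      show "t \<le> s" using False by simp
      fix u assume "u \<le> s"
      moreover have "\<phi>' s - \<phi>' u \<le> L * \<bar>u - s\<bar>" using lipschitz[of u s] by linarith
      ultimately show "\<exists>y. (\<psi> has_real_derivative y) (at u) \<and> y \<ge> 0"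
        by (intro exI[of _ "\<phi>' u - \<phi>' s - L * (u - s)"] conjI deriv_\<psi>)
          (simp add: algebra_simps)
    qed
  qed
  then show ?thesis unfolding \<psi>_def by simp
qed

lemma quadratically_coercive_attains_min:
  fixes \<phi> :: "real \<Rightarrow> real" and c \<tau> :: real
  assumes cont: "continuous_on UNIV \<phi>" and tau_pos: "0 < \<tau>"
    and lower: "\<And>t. \<phi> t \<ge> \<phi> 0 + t * c + \<tau> / 2 * t\<^sup>2"
  shows "\<exists>a. \<forall>b. \<phi> a \<le> \<phi> b"
proof -
  define R where "R = 2 * \<bar>c\<bar> / \<tau>"
  have "R \<ge> 0" using tau_pos by (simp add: R_def)
  then have "{-R..R} \<noteq> {}" by simp
  then obtain a where min_a: "\<And>b. b \<in> {-R..R} \<Longrightarrow> \<phi> a \<le> \<phi> b"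
    using continuous_attains_inf[OF compact_Icc _ continuous_on_subset[OF cont subset_UNIV]]
    by blast
  have "\<phi> a \<le> \<phi> b" for b
  proof (cases "b \<in> {-R..R}")
    case False
    then have "R \<le> \<bar>b\<bar>" by auto
    then have "\<bar>c\<bar> \<le> \<tau> / 2 * \<bar>b\<bar>"
      using tau_pos by (simp add: R_def field_simps)
    then have "\<bar>c\<bar> * \<bar>b\<bar> \<le> \<tau> / 2 * b\<^sup>2"
      by (metis abs_ge_zero mult.assoc mult_right_mono power2_abs power2_eq_square)
    moreover have "- (\<bar>c\<bar> * \<bar>b\<bar>) \<le> b * c"
      by (metis abs_ge_minus_self abs_mult minus_le_iff mult.commute)
    ultimately have "\<phi> 0 \<le> \<phi> b" using lower[of b] by linarith
    moreover have "\<phi> a \<le> \<phi> 0" using min_a \<open>R \<ge> 0\<close> by simp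
    ultimately show ?thesis by simp
  qed (rule min_a)
  then show ?thesis by blast
qed

locale smooth_strongly_convex =
  fixes f :: "'a::real_inner \<Rightarrow> real" and g :: "'a \<Rightarrow> 'a" and \<tau> L :: real
  assumes tau_pos: "0 < \<tau>" and L_pos: "0 < L"
    and grad: "\<And>x. (f has_derivative (\<lambda>h. g x \<bullet> h)) (at x)"
    and strongly_convex: "\<And>x y. f y \<ge> f x + g x \<bullet> (y - x) + \<tau> / 2 * (norm (x - y))\<^sup>2"
    and lipschitz_grad: "\<And>x y. norm (g x - g y) \<le> L * norm (x - y)"
begin

lemma gradient_dominance: "f x - f y \<le> (norm (g x))\<^sup>2 / (2 * \<tau>)"
proof -
  define h where "h = y - x"
  have "f x - f y \<le> - (g x \<bullet> h) - \<tau> / 2 * (norm h)\<^sup>2"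
    using strongly_convex[of x y] by (simp add: h_def norm_minus_commute)
  also have "\<dots> \<le> (norm (g x))\<^sup>2 / (2 * \<tau>)"
  proof -
    \<comment> \<open>complete the square\<close>
    have "0 \<le> (norm (g x + \<tau> *\<^sub>R h))\<^sup>2" by simp
    also have "\<dots> = (norm (g x))\<^sup>2 + 2 * \<tau> * (g x \<bullet> h) + \<tau>\<^sup>2 * (norm h)\<^sup>2"
      unfolding power2_norm_eq_inner
      by (simp add: inner_add_left inner_add_right inner_commute algebra_simps power2_eq_square)
    finally show ?thesis
      using tau_pos by (simp add: field_simps power2_eq_square)
  qed
  finally show ?thesis .
qed

lemma line_derivative:
  "((\<lambda>t. f (x + t *\<^sub>R e)) has_real_derivative g (x + t *\<^sub>R e) \<bullet> e) (at t)"
proof -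
  have "((\<lambda>t. x + t *\<^sub>R e) has_derivative (\<lambda>h. h *\<^sub>R e)) (at t)"
    by (auto intro!: derivative_eq_intros)
  from has_derivative_compose[OF this grad]
  show ?thesis
    by (simp add: has_field_derivative_def mult_commute_abs)
qed

lemma inexact_line_search_decrease:
  assumes unit: "norm e = 1"
    and accurate: "\<And>\<alpha>. (\<forall>\<beta>. f (x + \<alpha> *\<^sub>R e) \<le> f (x + \<beta> *\<^sub>R e)) \<Longrightarrow> \<bar>s - \<alpha>\<bar> \<le> \<eta>"
  shows "f (x + s *\<^sub>R e) \<le> f x - (g x \<bullet> e)\<^sup>2 / (2 * L) + L * \<eta>\<^sup>2 / 2"
proof -
  define \<phi> where "\<phi> t = f (x + t *\<^sub>R e)" for t
  define \<phi>' where "\<phi>' t = g (x + t *\<^sub>R e) \<bullet> e" for t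
  have deriv: "(\<phi> has_real_derivative \<phi>' t) (at t)" for t
    unfolding \<phi>_def \<phi>'_def by (rule line_derivative)
  have lipschitz: "\<bar>\<phi>' u - \<phi>' v\<bar> \<le> L * \<bar>u - v\<bar>" for u v
  proof -
    have "\<bar>\<phi>' u - \<phi>' v\<bar> \<le> norm (g (x + u *\<^sub>R e) - g (x + v *\<^sub>R e))"
      using Cauchy_Schwarz_ineq2[of "g (x + u *\<^sub>R e) - g (x + v *\<^sub>R e)" e] unit
      by (simp add: \<phi>'_def inner_diff_left)
    also have "\<dots> \<le> L * norm ((x + u *\<^sub>R e) - (x + v *\<^sub>R e))" by (rule lipschitz_grad)
    also have "norm ((x + u *\<^sub>R e) - (x + v *\<^sub>R e)) = \<bar>u - v\<bar>"
      using unit by (simp flip: scaleR_diff_left)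
    finally show ?thesis .
  qed
  have "\<phi> t \<ge> \<phi> 0 + t * \<phi>' 0 + \<tau> / 2 * t\<^sup>2" for t
    using strongly_convex[of x "x + t *\<^sub>R e"] unit by (simp add: \<phi>_def \<phi>'_def power2_abs)
  then obtain a where min_a: "\<And>b. \<phi> a \<le> \<phi> b"
    using quadratically_coercive_attains_min[OF _ tau_pos]
      DERIV_continuous_on[OF deriv] by blast
  have "\<phi>' a = 0"
    by (rule DERIV_local_min[OF deriv, of 1]) (simp_all add: min_a)
  have "(s - a)\<^sup>2 \<le> \<eta>\<^sup>2"
    using accurate[of a] min_a unfolding \<phi>_def
    by (metis abs_ge_zero power2_abs power_mono)
  have "\<phi> s \<le> \<phi> a + (s - a) * \<phi>' a + L / 2 * (s - a)\<^sup>2"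
    by (rule lipschitz_deriv_quadratic_upper_bound[OF deriv lipschitz])
  also have "\<dots> \<le> \<phi> a + L / 2 * \<eta>\<^sup>2"
    using \<open>\<phi>' a = 0\<close> \<open>(s - a)\<^sup>2 \<le> \<eta>\<^sup>2\<close> L_pos by simp
  also have "\<phi> a \<le> \<phi> (- \<phi>' 0 / L)" by (rule min_a)
  also have "\<phi> (- \<phi>' 0 / L) \<le> \<phi> 0 + (- \<phi>' 0 / L - 0) * \<phi>' 0 + L / 2 * (- \<phi>' 0 / L - 0)\<^sup>2"
    by (rule lipschitz_deriv_quadratic_upper_bound[OF deriv lipschitz])
  also have "\<dots> = \<phi> 0 - (\<phi>' 0)\<^sup>2 / (2 * L)"
    using L_pos by (simp add: field_simps power2_eq_square)
  finally show ?thesis by (simp add: \<phi>_def \<phi>'_def)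
qed

end

lemma expectation_pmf_of_set_PiE_lessThan_Suc:
  fixes h :: "(nat \<Rightarrow> 'a) \<Rightarrow> real"
  assumes fin: "finite B" and ne: "B \<noteq> {}"
  shows "measure_pmf.expectation (pmf_of_set ({..<Suc k} \<rightarrow>\<^sub>E B)) h
       = measure_pmf.expectation (pmf_of_set ({..<k} \<rightarrow>\<^sub>E B))
           (\<lambda>d. measure_pmf.expectation (pmf_of_set B) (\<lambda>i. h (d(k := i))))"
proof -
  have card: "card ({..<j} \<rightarrow>\<^sub>E B) = card B ^ j" for j
    by (simp add: card_PiE)
  have "(\<Sum>d\<in>{..<Suc k} \<rightarrow>\<^sub>E B. h d) = (\<Sum>(i, d)\<in>B \<times> ({..<k} \<rightarrow>\<^sub>E B). h (d(k := i)))"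
    unfolding lessThan_Suc PiE_insert_eq
    by (subst sum.reindex[OF inj_combinator]) (simp_all add: case_prod_unfold)
  also have "\<dots> = (\<Sum>d\<in>{..<k} \<rightarrow>\<^sub>E B. \<Sum>i\<in>B. h (d(k := i)))"
    by (subst sum.swap) (simp add: sum.cartesian_product)
  finally show ?thesis
    using fin ne by (simp add: integral_pmf_of_set finite_PiE PiE_eq_empty_iff card
        sum_divide_distrib[symmetric] field_simps)
qed

lemma norm_squared_vec: "(norm (v :: real^'n))\<^sup>2 = (\<Sum>i\<in>UNIV. (v $ i)\<^sup>2)"
  unfolding power2_norm_eq_inner inner_vec_def by (simp add: power2_eq_square)

lemma random_coordinate_step:
  fixes f :: "real^'n \<Rightarrow> real" and s :: "'n \<Rightarrow> real" and \<tau> L \<eta> :: real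
  assumes "smooth_strongly_convex f g \<tau> L"
    and accurate: "\<And>i \<alpha>. (\<forall>\<beta>. f (x + \<alpha> *\<^sub>R axis i 1) \<le> f (x + \<beta> *\<^sub>R axis i 1))
                    \<Longrightarrow> \<bar>s i - \<alpha>\<bar> \<le> \<eta>"
  shows "measure_pmf.expectation (pmf_of_set UNIV) (\<lambda>i. f (x + s i *\<^sub>R axis i 1) - f z)
         \<le> (1 - \<tau> / (real CARD('n) * L)) * (f x - f z) + L * \<eta>\<^sup>2 / 2"
proof -
  interpret smooth_strongly_convex f g \<tau> L by fact
  let ?n = "real CARD('n)"
  have "f (x + s i *\<^sub>R axis i 1) - f z \<le> f x - f z - (g x $ i)\<^sup>2 / (2 * L) + L * \<eta>\<^sup>2 / 2" for i
    using inexact_line_search_decrease[where x = x and e = "axis i 1",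
        OF norm_axis_1 accurate[where i = i]]
    by (simp add: inner_axis)
  then have "(\<Sum>i\<in>UNIV. f (x + s i *\<^sub>R axis i 1) - f z)
      \<le> (\<Sum>i\<in>UNIV. f x - f z - (g x $ i)\<^sup>2 / (2 * L) + L * \<eta>\<^sup>2 / 2)"
    by (rule sum_mono)
  also have "\<dots> = ?n * (f x - f z) - (norm (g x))\<^sup>2 / (2 * L) + ?n * (L * \<eta>\<^sup>2 / 2)"
    using norm_squared_vec[of "g x"]
    by (simp add: sum.distrib sum_subtractf sum_divide_distrib[symmetric])
  also have "\<dots> \<le> ?n * (f x - f z) - \<tau> / L * (f x - f z) + ?n * (L * \<eta>\<^sup>2 / 2)"
  proof -
    have "\<tau> / L * (f x - f z) \<le> \<tau> / L * ((norm (g x))\<^sup>2 / (2 * \<tau>))"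
      using gradient_dominance[of x z] tau_pos L_pos by (intro mult_left_mono) auto
    then show ?thesis using tau_pos by simp
  qed
  finally have "(\<Sum>i\<in>UNIV. f (x + s i *\<^sub>R axis i 1) - f z) / ?n
      \<le> (?n * (f x - f z) - \<tau> / L * (f x - f z) + ?n * (L * \<eta>\<^sup>2 / 2)) / ?n"
    by (rule divide_right_mono) simp
  also have "\<dots> = (1 - \<tau> / (?n * L)) * (f x - f z) + L * \<eta>\<^sup>2 / 2"
    using L_pos by (simp add: field_simps)
  finally show ?thesis by (simp add: integral_pmf_of_set)
qed

lemma cd_iter_cong:
  "(\<And>j. j < k \<Longrightarrow> d j = d' j) \<Longrightarrow> cd_iter ls x0 d k = cd_iter ls x0 d' k"
  by (induction k) (auto simp: Let_def)

definition cd_expected_gap ::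
    "(real^'n \<Rightarrow> real) \<Rightarrow> (nat \<Rightarrow> real^'n \<Rightarrow> 'n \<Rightarrow> real) \<Rightarrow> real^'n \<Rightarrow> real \<Rightarrow> nat \<Rightarrow> real"
  where "cd_expected_gap f ls x0 c k =
    measure_pmf.expectation (pmf_of_set ({..<k} \<rightarrow>\<^sub>E UNIV)) (\<lambda>d. f (cd_iter ls x0 d k) - c)"

lemma cd_expected_gap_0 [simp]: "cd_expected_gap f ls x0 c 0 = f x0 - c"
  by (simp add: cd_expected_gap_def)

lemma cd_expected_gap_Suc:
  fixes f :: "real^'n \<Rightarrow> real" and \<tau> L \<eta> :: real
  assumes "smooth_strongly_convex f g \<tau> L"
    and line_search: "\<And>k x i \<alpha>. (\<forall>\<beta>. f (x + \<alpha> *\<^sub>R axis i 1) \<le> f (x + \<beta> *\<^sub>R axis i 1))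
                         \<Longrightarrow> \<bar>ls k x i - \<alpha>\<bar> \<le> \<eta>"
  shows "cd_expected_gap f ls x0 (f z) (Suc k)
         \<le> (1 - \<tau> / (real CARD('n) * L)) * cd_expected_gap f ls x0 (f z) k + L * \<eta>\<^sup>2 / 2"
proof -
  let ?P = "pmf_of_set ({..<k} \<rightarrow>\<^sub>E (UNIV :: 'n set))"
  let ?x = "\<lambda>d. cd_iter ls x0 d k"
  let ?q = "1 - \<tau> / (real CARD('n) * L)"
  have P_finite: "finite (set_pmf ?P)"
    by (simp add: finite_PiE PiE_eq_empty_iff)
  have update: "cd_iter ls x0 (d(k := i)) (Suc k) = ?x d + ls k (?x d) i *\<^sub>R axis i 1" for d i
    using cd_iter_cong[of k "d(k := i)" d] by (simp add: Let_def)
  have "cd_expected_gap f ls x0 (f z) (Suc k)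
      = measure_pmf.expectation ?P (\<lambda>d. measure_pmf.expectation (pmf_of_set UNIV)
          (\<lambda>i. f (?x d + ls k (?x d) i *\<^sub>R axis i 1) - f z))"
    unfolding cd_expected_gap_def update
      expectation_pmf_of_set_PiE_lessThan_Suc[OF finite_class.finite_UNIV UNIV_not_empty] ..
  also have "\<dots> \<le> measure_pmf.expectation ?P (\<lambda>d. ?q * (f (?x d) - f z) + L * \<eta>\<^sup>2 / 2)"
    by (intro integral_mono integrable_measure_pmf_finite[OF P_finite]
        random_coordinate_step[OF assms(1) line_search])
  also have "\<dots> = ?q * cd_expected_gap f ls x0 (f z) k + L * \<eta>\<^sup>2 / 2"
    unfolding cd_expected_gap_def
    by (simp add: integrable_measure_pmf_finite[OF P_finite])
  finally show ?thesis .
qed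

lemma affine_recurrence_le:
  fixes u :: "nat \<Rightarrow> real" and q c :: real
  assumes "0 \<le> q" "q < 1" "0 \<le> c" and step: "\<And>k. u (Suc k) \<le> q * u k + c"
  shows "u k \<le> q ^ k * u 0 + c / (1 - q)"
proof (induction k)
  case 0
  then show ?case using assms by simp
next
  case (Suc k)
  have "u (Suc k) \<le> q * (q ^ k * u 0 + c / (1 - q)) + c"
    using step[of k] Suc mult_left_mono[OF Suc \<open>0 \<le> q\<close>] by linarith
  also have "\<dots> = q ^ Suc k * u 0 + c / (1 - q)"
    using \<open>q < 1\<close> by (simp add: field_simps)
  finally show ?case .
qed

lemma geometric_decay_after_log_steps:
  fixes E B a :: real and m :: nat
  assumes "0 \<le> E" "0 < B" "0 < a" "a \<le> 1"
    and m: "real m \<ge> 4 / a * ln (E / B) - 1"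
  shows "(1 - a) ^ m * E \<le> 7 / 4 * B"
proof (cases "E \<le> 7 / 4 * B")
  case True
  have "(1 - a) ^ m * E \<le> E"
    using assms by (intro mult_left_le_one_le power_le_one) auto
  with True show ?thesis by linarith
next
  case False
  define R where "R = E / B"
  have R: "R > 7 / 4" using False \<open>0 < B\<close> by (simp add: R_def field_simps)
  have "(1 - a) ^ m \<le> exp (- a) ^ m"
    using assms exp_ge_add_one_self[of "-a"] by (intro power_mono) auto
  also have "\<dots> = exp (- (a * real m))" by (simp add: exp_of_nat_mult[symmetric] mult.commute)
  also have "\<dots> \<le> exp (1 - 4 * ln R)"
  proof -
    have "a * (4 / a * ln R - 1) \<le> a * real m"
      using mult_left_mono[OF m, of a] \<open>0 < a\<close> by (simp add: R_def)
    moreover have "a * (4 / a * ln R - 1) = 4 * ln R - a"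
      using \<open>0 < a\<close> by (simp add: field_simps)
    ultimately have "4 * ln R - a \<le> a * real m" by simp
    then show ?thesis using \<open>a \<le> 1\<close> by simp
  qed
  also have "\<dots> = exp 1 / R ^ 4"
    using R by (simp add: exp_diff exp_of_nat_mult[of 4, simplified])
  finally have "(1 - a) ^ m * E \<le> exp 1 / R ^ 4 * E"
    using \<open>0 \<le> E\<close> by (rule mult_right_mono)
  also have "\<dots> = exp 1 / R ^ 3 * B"
    using R \<open>0 < B\<close> by (simp add: R_def field_simps power3_eq_cube power4_eq_xxxx)
  also have "\<dots> \<le> 3 / (7 / 4) ^ 3 * B"
  proof -
    have "(7 / 4) ^ 3 \<le> R ^ 3" using R by (intro power_mono) auto
    then show ?thesis
      using exp_le \<open>0 < B\<close> R by (intro mult_right_mono frac_le) auto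
  qed
  also have "\<dots> \<le> 7 / 4 * B" using \<open>0 < B\<close> by (intro mult_right_mono) (auto simp: field_simps)
  finally show ?thesis .
qed

lemma gt_minus_one_of_div_le:
  fixes c :: real and K T m :: nat
  assumes "0 < T" and "c * real T \<le> real K" and "K div T \<le> m"
  shows "c - 1 < real m"
proof -
  have "K < (K div T + 1) * T"
    using dividend_less_times_div[OF \<open>0 < T\<close>, of K] by (simp add: algebra_simps)
  also have "\<dots> \<le> (m + 1) * T" using \<open>K div T \<le> m\<close> by simp
  finally have "real K < real ((m + 1) * T)" by (simp only: of_nat_less_iff)
  also have "\<dots> = (real m + 1) * real T" by (simp add: algebra_simps)
  finally have "c * real T < (real m + 1) * real T" using \<open>c * real T \<le> real K\<close> by linarith
  then show ?thesis by (simp add: mult_less_cancel_right)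
qed

theorem theorem5:
  fixes f :: "real^'n \<Rightarrow> real" and g :: "real^'n \<Rightarrow> real^'n"
    and \<tau> L \<eta> :: real and x0 xstar :: "real^'n"
    and ls :: "nat \<Rightarrow> real^'n \<Rightarrow> 'n \<Rightarrow> real"
    and T K m :: nat
  assumes tau_pos: "0 < \<tau>" and tau_le_L: "\<tau> \<le> L" and eta_pos: "0 < \<eta>"
    and grad: "\<And>x. (f has_derivative (\<lambda>h. g x \<bullet> h)) (at x)"
    and strongly_convex: "\<And>x y. f y \<ge> f x + g x \<bullet> (y - x) + \<tau> / 2 * (norm (x - y))\<^sup>2"
    and lipschitz_grad: "\<And>x y. norm (g x - g y) \<le> L * norm (x - y)"
    and minimizer: "\<And>y. f xstar \<le> f y"
    and line_search: "\<And>k x i \<alpha>. (\<forall>\<beta>. f (x + \<alpha> *\<^sub>R axis i 1) \<le> f (x + \<beta> *\<^sub>R axis i 1))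
                         \<Longrightarrow> \<bar>ls k x i - \<alpha>\<bar> \<le> \<eta>"
    and T_pos: "0 < T"
    and K_large: "real K \<ge> 4 * real CARD('n) * L / \<tau>
                     * ln ((f x0 - f xstar) / (\<eta>\<^sup>2 * 2 * real CARD('n) * L\<^sup>2 / \<tau>)) * real T"
    and iterations: "K div T \<le> m"
  shows "measure_pmf.expectation (pmf_of_set ({..<m} \<rightarrow>\<^sub>E (UNIV :: 'n set)))
           (\<lambda>d. f (cd_iter ls x0 d m) - f xstar)
         \<le> 4 * real CARD('n) * L\<^sup>2 * \<eta>\<^sup>2 / \<tau>"
proof -
  have L_pos: "0 < L" using tau_pos tau_le_L by linarith
  have smooth: "smooth_strongly_convex f g \<tau> L"
    by (rule smooth_strongly_convex.intro) (fact tau_pos L_pos grad strongly_convex lipschitz_grad)+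
  define n where "n = real CARD('n)"
  define a where "a = \<tau> / (n * L)"
  define B where "B = \<eta>\<^sup>2 * 2 * n * L\<^sup>2 / \<tau>"
  have n: "1 \<le> n" by (simp add: n_def)
  have a: "0 < a" "a \<le> 1"
    using tau_pos tau_le_L L_pos n by (auto simp: a_def field_simps intro: order_trans)
  have gap_step: "cd_expected_gap f ls x0 (f xstar) (Suc k)
      \<le> (1 - a) * cd_expected_gap f ls x0 (f xstar) k + L * \<eta>\<^sup>2 / 2" for k
    using cd_expected_gap_Suc[where ls = ls, OF smooth line_search] by (simp add: a_def n_def)
  have "cd_expected_gap f ls x0 (f xstar) m
      \<le> (1 - a) ^ m * (f x0 - f xstar) + L * \<eta>\<^sup>2 / 2 / a"
    using affine_recurrence_le[where u = "cd_expected_gap f ls x0 (f xstar)", OF _ _ _ gap_step]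
      a L_pos by simp
  moreover have "(1 - a) ^ m * (f x0 - f xstar) \<le> 7 / 4 * B"
  proof (rule geometric_decay_after_log_steps)
    have "4 / a * ln ((f x0 - f xstar) / B)
        = 4 * real CARD('n) * L / \<tau> * ln ((f x0 - f xstar) / (\<eta>\<^sup>2 * 2 * real CARD('n) * L\<^sup>2 / \<tau>))"
      by (simp add: a_def B_def n_def)
    then show "4 / a * ln ((f x0 - f xstar) / B) - 1 \<le> real m"
      using gt_minus_one_of_div_le[OF T_pos K_large iterations] by linarith
  qed (use minimizer[of x0] a tau_pos L_pos eta_pos n in \<open>auto simp: B_def\<close>)
  moreover have "L * \<eta>\<^sup>2 / 2 / a = B / 4"
    using tau_pos L_pos n by (simp add: a_def B_def field_simps power2_eq_square)
  moreover have "4 * real CARD('n) * L\<^sup>2 * \<eta>\<^sup>2 / \<tau> = 2 * B"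
    by (simp add: B_def n_def)
  ultimately show ?thesis unfolding cd_expected_gap_def by linarith
qed

end
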